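(* Fix a positive integer $k$ and let $a_n=\Gamma(k,n)$ for $n\ge 1$. (1) If $k$ is odd, then $(a_n)_{n\ge1}$ is periodic with period $k$, and among $a_1,\ldots,a_k$ the number of $1$'s is one more than the number of $2$'s. (2) If $k$ is even, then $(a_n)_{n\ge1}$ is periodic with period $2k$, and among $a_1,\ldots,a_{2k}$ the number of $1$'s is two more than the number of $2$'s.
   Context: For relatively prime positive integers $p,q$, exactly one of the equations $px+qy=\frac{(p-1)(q-1)}{2}$ (Equation 1) and $px+qy+1=\frac{(p-1)(q-1)}{2}$ (Equation 2) has a solution in nonnegative integers $(x,y)$. For positive integers $a,b$ with $d=\gcd(a,b)$, $\Gamma(a,b)=1$ if Equation 1 with $(p,q)=(a/d,b/d)$ has a nonnegative integer solution, and $\Gamma(a,b)=2$ otherwise. The period of a sequence $(a_n)_{n\ge1}$ is the smallest positive integer $T$ such that $a_n=a_{n+T}$ for all $n\ge 1$. *)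

theory Defs
  imports Main
begin

text \<open>Equation 1 for (p,q): p x + q y = (p-1)(q-1)/2 in nonnegative integers.
  For coprime p, q the right-hand side is an integer, so nat division is exact.\<close>
definition eq1_solvable :: "nat \<Rightarrow> nat \<Rightarrow> bool" where
  "eq1_solvable p q \<longleftrightarrow> (\<exists>x y :: nat. p * x + q * y = (p - 1) * (q - 1) div 2)"

definition Gamma :: "nat \<Rightarrow> nat \<Rightarrow> nat" where
  "Gamma a b = (let d = gcd a b in if eq1_solvable (a div d) (b div d) then 1 else 2)"

definition is_period :: "(nat \<Rightarrow> 'a) \<Rightarrow> nat \<Rightarrow> bool" where
  "is_period a T \<longleftrightarrow> T > 0 \<and> (\<forall>n\<ge>1. a n = a (n + T))"

definition has_least_period :: "(nat \<Rightarrow> 'a) \<Rightarrow> nat \<Rightarrow> bool" where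
  "has_least_period a T \<longleftrightarrow> is_period a T \<and> (\<forall>T'. 0 < T' \<and> T' < T \<longrightarrow> \<not> is_period a T')"

end

theory Submission
  imports Defs
begin

(* For coprime p, q the equation p a + q b = p q + 1 has exactly one solution in positive
   integers, and Equation 1 is solvable iff both a and b are odd (put a = 2x + 1, b = 2y + 1).
   The solution (a, b) for (p, q) yields the solutions (a + p - b, b) for (p, q + p) and
   (a + b - q, p - b) for (p, p - q); comparing parities shows that Gamma(k, n + k) and
   Gamma(k, k - n) equal Gamma(k, n) or its opposite according to the parity of k / gcd(k, n).
   Hence Gamma(k, -) has period 2k, and period k if k is odd. The reflection n |-> k - n
   (k odd) resp. n |-> 2k - n swaps the values 1 and 2 away from the multiples of k, where
   Gamma = 1, which gives the counts. A shorter period would make some proper divisor g of the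
   period a period as well; this fails at n = k - g if k is odd, and for even k at n = 1 if
   g divides k and at n = k - g/2 otherwise. *)

lemma is_periodD:
  assumes "is_period a T" "n \<ge> 1"
  shows "a (n + T) = a n"
  using assms unfolding is_period_def by metis

lemma is_period_add_mult:
  assumes "is_period a T" "n \<ge> 1"
  shows "a (n + m * T) = a n"
proof (induction m)
  case (Suc m)
  have "a (n + Suc m * T) = a (n + m * T + T)"
    by (simp add: algebra_simps)
  also have "\<dots> = a (n + m * T)"
    using is_periodD[OF assms(1)] assms(2) by simp
  finally show ?case
    using Suc.IH by simp
qed simp

lemma is_period_gcd:
  assumes "is_period a T" "is_period a S"
  shows "is_period a (gcd T S)"
proof -
  have "T > 0"
    using assms(1) unfolding is_period_def by blast
  then obtain x y where xy: "T * x = S * y + gcd T S"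
    using bezout_nat[of T S] by auto
  have "a (n + gcd T S) = a n" if "n \<ge> 1" for n
  proof -
    have "a (n + gcd T S) = a (n + gcd T S + y * S)"
      using is_period_add_mult[OF assms(2)] that by simp
    also have "n + gcd T S + y * S = n + x * T"
      using xy by (simp add: mult.commute)
    also have "a (n + x * T) = a n"
      using is_period_add_mult[OF assms(1) that] .
    finally show ?thesis .
  qed
  with \<open>T > 0\<close> show ?thesis
    unfolding is_period_def by simp
qed

lemma has_least_periodI:
  assumes "is_period a P"
    and "\<And>g. g dvd P \<Longrightarrow> 0 < g \<Longrightarrow> g < P \<Longrightarrow> \<not> is_period a g"
  shows "has_least_period a P"
  unfolding has_least_period_def
proof (intro conjI allI impI assms(1) notI)
  fix T assume T: "0 < T \<and> T < P" "is_period a T"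
  have "is_period a (gcd T P)"
    using is_period_gcd[OF T(2) assms(1)] .
  moreover have "gcd T P \<le> T"
    using T(1) by simp
  ultimately show False
    using assms(2)[of "gcd T P"] T(1) by simp
qed

lemma card_filter_by_involution:
  assumes "finite S" "E \<subseteq> S" "\<And>x. x \<in> E \<Longrightarrow> P x"
    and "\<And>x. x \<in> S - E \<Longrightarrow> f x \<in> S - E \<and> f (f x) = x \<and> (P (f x) \<longleftrightarrow> \<not> P x)"
  shows "card {x \<in> S. P x} = card {x \<in> S. \<not> P x} + card E"
proof -
  define A where "A = {x \<in> S - E. P x}"
  define B where "B = {x \<in> S - E. \<not> P x}"
  have "f ` A \<subseteq> B" "f ` B \<subseteq> A" "\<forall>x \<in> A. f (f x) = x" "\<forall>x \<in> B. f (f x) = x"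
    using assms(4) unfolding A_def B_def by auto
  then have "bij_betw f A B"
    by (intro bij_betw_byWitness[where f' = f])
  then have "card A = card B"
    by (rule bij_betw_same_card)
  moreover have "{x \<in> S. P x} = A \<union> E" "{x \<in> S. \<not> P x} = B"
    using assms(2,3) unfolding A_def B_def by auto
  moreover have "card (A \<union> E) = card A + card E"
    using assms(1,2) unfolding A_def by (intro card_Un_disjoint) (auto intro: finite_subset)
  ultimately show ?thesis
    by simp
qed

lemma dvd_double_not_dvd:
  fixes g k :: nat
  assumes "g dvd 2 * k" "\<not> g dvd k"
  obtains h where "g = 2 * h" "h dvd k" "odd (k div h)"
proof -
  have "even g"
    using assms coprime_dvd_mult_right_iff[of g 2 k] by auto
  then obtain h where h: "g = 2 * h"
    by blast
  then have "h dvd k"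
    using assms(1) by simp
  moreover have "odd (k div h)"
  proof
    assume "even (k div h)"
    then obtain r where "k div h = 2 * r"
      by blast
    have "k = h * (k div h)"
      using \<open>h dvd k\<close> by simp
    also have "\<dots> = g * r"
      using h(1) \<open>k div h = 2 * r\<close> by simp
    finally have "k = g * r" .
    with assms(2) show False
      by simp
  qed
  ultimately show thesis
    using h that by blast
qed

lemma coprime_div_gcd_pos:
  fixes k n :: nat
  assumes "k > 0" "n > 0"
  shows "coprime (k div gcd k n) (n div gcd k n)" "k div gcd k n > 0" "n div gcd k n > 0"
  using assms by (simp_all add: div_gcd_coprime div_greater_zero_iff)

lemma pos_solution_exists:
  fixes p q :: int
  assumes "coprime p q" "p > 0" "q > 0"
  obtains a b where "a > 0" "b > 0" "p * a + q * b = p * q + 1"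
proof -
  obtain u v where uv: "u * p + v * q = 1"
    using assms(1) by (metis bezout_int coprime_iff_gcd_eq_1)
  define b where "b = (v - 1) mod p + 1"
  have b: "0 < b" "b \<le> p"
    using assms(2) unfolding b_def by (simp_all add: add1_zle_eq)
  have "b mod p = v mod p"
    unfolding b_def by (simp add: mod_add_left_eq)
  then obtain t where t: "b = v + p * t"
    by (metis mod_eq_dvd_iff dvdE diff_eq_eq add.commute)
  define a where "a = q + u - q * t"
  have sol: "p * a + q * b = p * q + 1"
    using uv t unfolding a_def by (simp add: algebra_simps)
  have "q * b \<le> q * p"
    using b assms(3) by simp
  then have "p * a > 0"
    using sol by (simp add: algebra_simps)
  then have "a > 0"
    using assms(2) zero_less_mult_pos by blast
  with b sol show thesis by (intro that)
qed

lemma pos_solution_le: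
  fixes p q a b :: int
  assumes "p > 0" "q > 0" "a > 0" "b > 0" "p * a + q * b = p * q + 1"
  shows "a \<le> q" "b \<le> p"
proof -
  have "p \<le> p * a" "q \<le> q * b"
    using assms(1-4) by simp_all
  then have "p * a \<le> p * q" "q * b \<le> p * q"
    using assms(1,2,5) by linarith+
  then show "a \<le> q" "b \<le> p"
    using assms(1,2) by (simp_all add: mult.commute[of p q])
qed

lemma pos_solution_unique:
  fixes p q a b a' b' :: int
  assumes "coprime p q" "p > 0" "q > 0"
    and "a > 0" "b > 0" "p * a + q * b = p * q + 1"
    and "a' > 0" "b' > 0" "p * a' + q * b' = p * q + 1"
  shows "a = a'" "b = b'"
proof -
  have "p * (a - a') = q * (b' - b)"
    using assms(6,9) by (simp add: algebra_simps)
  then have "q dvd p * (a - a')"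
    by simp
  then have "q dvd a - a'"
    using coprime_dvd_mult_right_iff[of q p] assms(1) by (simp add: coprime_commute)
  moreover have "\<bar>a - a'\<bar> < q"
    using pos_solution_le(1)[OF assms(2-6)] pos_solution_le(1)[OF assms(2,3,7-9)] assms(4,7)
    by linarith
  ultimately show "a = a'"
    using dvd_imp_le_int[of "a - a'" q] by (cases "a = a'") auto
  then have "q * b = q * b'"
    using assms(6,9) by (metis add_left_cancel)
  then show "b = b'"
    using assms(3) by simp
qed

lemma odd_pos_int_iff:
  fixes a :: int
  shows "0 < a \<and> odd a \<longleftrightarrow> (\<exists>x::nat. a = 2 * int x + 1)"
proof
  assume a: "0 < a \<and> odd a"
  then obtain m where m: "a = 2 * m + 1"
    by (blast elim: oddE)
  with a have "a = 2 * int (nat m) + 1"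
    by simp
  then show "\<exists>x::nat. a = 2 * int x + 1" ..
qed auto

lemma eq1_iff_odd_unknowns:
  fixes p q x y :: nat
  assumes "coprime p q" "p > 0" "q > 0"
  shows "p * x + q * y = (p - 1) * (q - 1) div 2 \<longleftrightarrow>
    int p * (2 * int x + 1) + int q * (2 * int y + 1) = int p * int q + 1"
proof -
  define N where "N = (p - 1) * (q - 1) div 2"
  have "odd p \<or> odd q"
    using assms(1) coprime_common_divisor[of p q 2] by auto
  then have "even ((p - 1) * (q - 1))"
    using assms(2,3) by auto
  then have "int (2 * N) = int ((p - 1) * (q - 1))"
    unfolding N_def by simp
  then have N: "2 * int N = (int p - 1) * (int q - 1)"
    using assms(2,3) by (simp only: of_nat_mult of_nat_diff) simp
  have "p * x + q * y = N \<longleftrightarrow> int p * int x + int q * int y = int N"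
    by (metis of_nat_add of_nat_eq_iff of_nat_mult)
  also have "\<dots> \<longleftrightarrow> 2 * (int p * int x + int q * int y) = 2 * int N"
    by (simp only: mult_cancel_left) simp
  also have "\<dots> \<longleftrightarrow> int p * (2 * int x + 1) + int q * (2 * int y + 1) = int p * int q + 1"
    unfolding N by (simp add: algebra_simps)
  finally show ?thesis
    unfolding N_def .
qed

lemma eq1_solvable_iff_odd_solution:
  fixes p q :: nat and a b :: int
  assumes "coprime p q" "p > 0" "q > 0"
    and "a > 0" "b > 0" "int p * a + int q * b = int p * int q + 1"
  shows "eq1_solvable p q \<longleftrightarrow> odd a \<and> odd b"
proof
  assume "eq1_solvable p q"
  then obtain x y where "int p * (2 * int x + 1) + int q * (2 * int y + 1) = int p * int q + 1"
    unfolding eq1_solvable_def eq1_iff_odd_unknowns[OF assms(1-3)] by blast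
  moreover have "coprime (int p) (int q)"
    using assms(1) by simp
  ultimately have "a = 2 * int x + 1" "b = 2 * int y + 1"
    using pos_solution_unique[of "int p" "int q" a b "2 * int x + 1" "2 * int y + 1"] assms(2-6)
    by simp_all
  then show "odd a \<and> odd b"
    by simp
next
  assume "odd a \<and> odd b"
  with assms(4,5) have "0 < a \<and> odd a" "0 < b \<and> odd b"
    by simp_all
  then obtain x y :: nat where "a = 2 * int x + 1" "b = 2 * int y + 1"
    unfolding odd_pos_int_iff by blast
  with assms(6) have "int p * (2 * int x + 1) + int q * (2 * int y + 1) = int p * int q + 1"
    by simp
  then show "eq1_solvable p q"
    unfolding eq1_solvable_def eq1_iff_odd_unknowns[OF assms(1-3)] by blast
qed

lemma eq1_solvable_add_self:
  fixes p q :: nat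
  assumes "coprime p q" "p > 0" "q > 0"
  shows "eq1_solvable p (q + p) \<longleftrightarrow> (eq1_solvable p q \<longleftrightarrow> odd p)"
proof -
  have "coprime (int p) (int q)" "int p > 0" "int q > 0"
    using assms by simp_all
  then obtain a b where sol: "a > 0" "b > 0" "int p * a + int q * b = int p * int q + 1"
    by (rule pos_solution_exists)
  have "b \<le> int p"
    using pos_solution_le(2)[OF _ _ sol] assms(2,3) by simp
  then have pos: "a + int p - b > 0"
    using sol(1) by simp
  have sol': "int p * (a + int p - b) + int (q + p) * b = int p * int (q + p) + 1"
    using sol(3) by (simp add: algebra_simps)
  have "coprime p (q + p)"
    using assms(1) by (metis add.commute coprime_iff_gcd_eq_1 gcd_add2)
  then have new: "eq1_solvable p (q + p) \<longleftrightarrow> odd (a + int p - b) \<and> odd b"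
    using eq1_solvable_iff_odd_solution[OF _ assms(2) _ pos sol(2) sol'] assms(3) by simp
  have old: "eq1_solvable p q \<longleftrightarrow> odd a \<and> odd b"
    using eq1_solvable_iff_odd_solution[OF assms sol] .
  show ?thesis
  proof (cases "even p")
    case True
    then have "odd (int p * a + int q * b)"
      unfolding sol(3) by simp
    then have "odd b"
      using True by simp
    then show ?thesis
      using new old True by simp
  next
    case False
    then show ?thesis
      using new old by auto
  qed
qed

lemma eq1_solvable_diff_self:
  fixes p q :: nat
  assumes "coprime p q" "0 < q" "q < p"
  shows "eq1_solvable p (p - q) \<longleftrightarrow> (eq1_solvable p q \<longleftrightarrow> even p)"
proof -
  have "coprime (int p) (int q)" "int p > 0" "int q > 0"
    using assms by simp_all
  then obtain a b where sol: "a > 0" "b > 0" "int p * a + int q * b = int p * int q + 1"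
    by (rule pos_solution_exists)
  have "b \<noteq> int p"
  proof
    assume "b = int p"
    then have "int p * a = 1"
      using sol(3) by (simp add: algebra_simps)
    then show False
      using assms(2,3) by (simp add: zmult_eq_1_iff)
  qed
  then have "b < int p"
    using pos_solution_le(2)[OF _ _ sol] assms(2,3) by simp
  have "int p * (a + b - int q) = (int p - int q) * b + 1"
    using sol(3) by (simp add: algebra_simps)
  moreover have "(int p - int q) * b > 0"
    using assms(3) sol(2) by simp
  ultimately have "0 < int p * (a + b - int q)"
    by linarith
  then have pos: "a + b - int q > 0"
    by (simp add: zero_less_mult_iff)
  have "int (p - q) = int p - int q"
    using assms(3) by simp
  then have sol': "int p * (a + b - int q) + int (p - q) * (int p - b) = int p * int (p - q) + 1"
    using sol(3) by (simp add: algebra_simps)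
  have "coprime p (p - q)"
    using assms(1,3) gcd_diff2_nat[of q p] by (simp add: coprime_iff_gcd_eq_1 gcd.commute)
  then have new: "eq1_solvable p (p - q) \<longleftrightarrow> odd (a + b - int q) \<and> odd (int p - b)"
    using eq1_solvable_iff_odd_solution[OF _ _ _ pos _ sol'] \<open>b < int p\<close> assms(3) by simp
  have old: "eq1_solvable p q \<longleftrightarrow> odd a \<and> odd b"
    using eq1_solvable_iff_odd_solution[OF assms(1) _ assms(2) sol] assms(3) by simp
  show ?thesis
  proof (cases "even p")
    case True
    then have "odd q"
      using assms(1) coprime_common_divisor[of p q 2] by auto
    then show ?thesis
      using new old True by auto
  next
    case False
    have "even (int p * a + int q * b) \<longleftrightarrow> even (int p * int q + 1)"
      using sol(3) by simp
    then show ?thesis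
      using new old False by auto
  qed
qed

lemma Gamma_eq_1_iff: "Gamma k n = 1 \<longleftrightarrow> eq1_solvable (k div gcd k n) (n div gcd k n)"
  by (simp add: Gamma_def Let_def)

lemma Gamma_eq_2_iff: "Gamma k n = 2 \<longleftrightarrow> Gamma k n \<noteq> 1"
  by (simp add: Gamma_def Let_def)

lemma Gamma_eq_Gamma_iff: "Gamma k m = Gamma k n \<longleftrightarrow> (Gamma k m = 1 \<longleftrightarrow> Gamma k n = 1)"
  by (simp add: Gamma_def Let_def)

lemma Gamma_divisor:
  assumes "k > 0" "n dvd k"
  shows "Gamma k n = 1"
proof -
  have "n > 0"
    using assms by (metis dvd_0_left_iff gr0I)
  then have "n div gcd k n = 1"
    using assms(2) by (simp add: gcd_nat.absorb2)
  then show ?thesis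
    unfolding Gamma_eq_1_iff eq1_solvable_def by simp
qed

lemma Gamma_multiple:
  assumes "k > 0" "k dvd n"
  shows "Gamma k n = 1"
proof -
  have "k div gcd k n = 1"
    using assms by (simp add: gcd_nat.absorb1)
  then show ?thesis
    unfolding Gamma_eq_1_iff eq1_solvable_def by simp
qed

lemma Gamma_add_self:
  fixes k n :: nat
  assumes "k > 0" "n > 0"
  shows "Gamma k (n + k) = 1 \<longleftrightarrow> (Gamma k n = 1 \<longleftrightarrow> odd (k div gcd k n))"
proof -
  have "gcd k (n + k) = gcd k n"
    by (metis add.commute gcd_add2)
  moreover have "(n + k) div gcd k n = n div gcd k n + k div gcd k n"
    by simp
  ultimately show ?thesis
    unfolding Gamma_eq_1_iff using eq1_solvable_add_self[OF coprime_div_gcd_pos[OF assms]] by simp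
qed

lemma Gamma_diff_self:
  fixes k n :: nat
  assumes "0 < n" "n < k"
  shows "Gamma k (k - n) = 1 \<longleftrightarrow> (Gamma k n = 1 \<longleftrightarrow> even (k div gcd k n))"
proof -
  define d where "d = gcd k n"
  define p where "p = k div d"
  define q where "q = n div d"
  have pq: "coprime p q" "0 < q"
    using coprime_div_gcd_pos[of k n] assms unfolding p_def q_def d_def by simp_all
  have d: "0 < d" "k = d * p" "n = d * q"
    using assms unfolding d_def p_def q_def by simp_all
  then have "q < p"
    using assms(2) by simp
  have "gcd k (k - n) = d"
    using gcd_diff2_nat[of n k] assms(2) unfolding d_def by (simp add: gcd.commute)
  moreover have "(k - n) div d = p - q"
    using d by (simp add: diff_mult_distrib2[symmetric])
  ultimately have "Gamma k (k - n) = 1 \<longleftrightarrow> eq1_solvable p (p - q)"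
    unfolding Gamma_eq_1_iff p_def by simp
  moreover have "Gamma k n = 1 \<longleftrightarrow> eq1_solvable p q"
    unfolding Gamma_eq_1_iff p_def q_def d_def ..
  ultimately show ?thesis
    using eq1_solvable_diff_self[OF pq \<open>q < p\<close>] unfolding p_def d_def by simp
qed

lemma Gamma_add_self_odd:
  fixes k n :: nat
  assumes "odd k" "n > 0"
  shows "Gamma k (n + k) = Gamma k n"
proof -
  have "odd (k div gcd k n)"
    using assms(1) by (metis dvd_mult_div_cancel gcd_dvd1 even_mult_iff)
  then show ?thesis
    using Gamma_add_self[of k n] assms by (simp add: Gamma_eq_Gamma_iff odd_pos)
qed

lemma Gamma_add_double:
  fixes k n :: nat
  assumes "k > 0" "n > 0"
  shows "Gamma k (n + 2 * k) = Gamma k n"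
proof -
  have "gcd k (n + k) = gcd k n"
    by (metis add.commute gcd_add2)
  then show ?thesis
    using Gamma_add_self[OF assms] Gamma_add_self[of k "n + k"] assms
    by (auto simp: Gamma_eq_Gamma_iff mult_2 add.assoc)
qed

lemma Gamma_diff_self_odd:
  fixes k n :: nat
  assumes "odd k" "0 < n" "n < k"
  shows "Gamma k (k - n) = 1 \<longleftrightarrow> Gamma k n \<noteq> 1"
proof -
  have "odd (k div gcd k n)"
    using assms(1) by (metis dvd_mult_div_cancel gcd_dvd1 even_mult_iff)
  then show ?thesis
    using Gamma_diff_self[OF assms(2,3)] by simp
qed

lemma Gamma_reflect:
  fixes k n :: nat
  assumes "0 < n" "n < 2 * k" "n \<noteq> k"
  shows "Gamma k (2 * k - n) = 1 \<longleftrightarrow> Gamma k n \<noteq> 1"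
proof (cases "n < k")
  case True
  have "gcd k (k - n) = gcd k n"
    using gcd_diff2_nat[of n k] True by (simp add: gcd.commute)
  moreover have "2 * k - n = (k - n) + k"
    using True by simp
  ultimately show ?thesis
    using Gamma_add_self[of k "k - n"] Gamma_diff_self[OF assms(1) True] True by auto
next
  case False
  with assms(3) have "k < n"
    by simp
  have "gcd k (n - k) = gcd k n"
    using gcd_diff1_nat[of k n] \<open>k < n\<close> by (simp add: gcd.commute)
  moreover have "n = (n - k) + k" "2 * k - n = k - (n - k)"
    using \<open>k < n\<close> by simp_all
  ultimately show ?thesis
    using Gamma_add_self[of k "n - k"] Gamma_diff_self[of "n - k" k] \<open>k < n\<close> assms(2) by auto
qed

lemma Gamma_has_least_period_odd:
  assumes "odd k"
  shows "has_least_period (Gamma k) k"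
proof (rule has_least_periodI)
  show "is_period (Gamma k) k"
    using Gamma_add_self_odd[OF assms] odd_pos[OF assms] unfolding is_period_def by simp
next
  fix g assume g: "g dvd k" "0 < g" "g < k"
  show "\<not> is_period (Gamma k) g"
  proof
    assume "is_period (Gamma k) g"
    then have "Gamma k (k - g + g) = Gamma k (k - g)"
      using g(3) by (intro is_periodD) simp_all
    moreover have "Gamma k (k - g) \<noteq> 1"
      using Gamma_diff_self_odd[OF assms g(2,3)] Gamma_divisor[OF odd_pos[OF assms] g(1)] by simp
    moreover have "Gamma k k = 1"
      using Gamma_divisor odd_pos[OF assms] by simp
    ultimately show False
      using g(3) by simp
  qed
qed

lemma Gamma_has_least_period_even:
  assumes "k > 0" "even k"
  shows "has_least_period (Gamma k) (2 * k)"
proof (rule has_least_periodI)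
  show "is_period (Gamma k) (2 * k)"
    using Gamma_add_double[OF assms(1)] assms(1) unfolding is_period_def by simp
next
  fix g assume g: "g dvd 2 * k" "0 < g" "g < 2 * k"
  show "\<not> is_period (Gamma k) g"
  proof
    assume per: "is_period (Gamma k) g"
    show False
    proof (cases "g dvd k")
      case True
      then have "Gamma k (1 + k) = Gamma k 1"
        using is_period_add_mult[OF per, of 1 "k div g"] by simp
      moreover have "Gamma k 1 = 1"
        using Gamma_divisor assms(1) by simp
      ultimately show False
        using Gamma_add_self[OF assms(1), of 1] assms(2) by simp
    next
      case False
      with g(1) obtain h where h: "g = 2 * h" "h dvd k" "odd (k div h)"
        by (rule dvd_double_not_dvd)
      then have "0 < h" "h < k" "gcd k h = h"
        using g(2,3) by (simp_all add: gcd_nat.absorb2)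
      then have "Gamma k (k - h) \<noteq> 1" "Gamma k (h + k) = 1"
        using Gamma_diff_self[of h k] Gamma_add_self[OF assms(1), of h] Gamma_divisor[OF assms(1) h(2)] h(3)
        by simp_all
      moreover have "Gamma k (k - h + g) = Gamma k (k - h)"
        using per \<open>h < k\<close> by (intro is_periodD) simp_all
      moreover have "k - h + g = h + k"
        using h(1) \<open>h < k\<close> by simp
      ultimately show False
        by simp
    qed
  qed
qed

lemma Gamma_count_odd:
  assumes "odd k"
  shows "card {n \<in> {1..k}. Gamma k n = 1} = card {n \<in> {1..k}. Gamma k n = 2} + 1"
proof -
  have "card {n \<in> {1..k}. Gamma k n = 1} = card {n \<in> {1..k}. Gamma k n \<noteq> 1} + card {k}"
  proof (rule card_filter_by_involution[where f = "\<lambda>n. k - n"])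
    show "{k} \<subseteq> {1..k}"
      using odd_pos[OF assms] by simp
    show "Gamma k n = 1" if "n \<in> {k}" for n
      using that Gamma_divisor odd_pos[OF assms] by simp
    show "k - n \<in> {1..k} - {k} \<and> k - (k - n) = n \<and> (Gamma k (k - n) = 1 \<longleftrightarrow> Gamma k n \<noteq> 1)"
      if "n \<in> {1..k} - {k}" for n
      using that Gamma_diff_self_odd[OF assms, of n] by auto
  qed simp
  then show ?thesis
    by (simp add: Gamma_eq_2_iff)
qed

lemma Gamma_count_double:
  assumes "k > 0"
  shows "card {n \<in> {1..2 * k}. Gamma k n = 1} = card {n \<in> {1..2 * k}. Gamma k n = 2} + 2"
proof -
  have "card {n \<in> {1..2 * k}. Gamma k n = 1} = card {n \<in> {1..2 * k}. Gamma k n \<noteq> 1} + card {k, 2 * k}"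
  proof (rule card_filter_by_involution[where f = "\<lambda>n. 2 * k - n"])
    show "{k, 2 * k} \<subseteq> {1..2 * k}"
      using assms by simp
    show "Gamma k n = 1" if "n \<in> {k, 2 * k}" for n
      using that Gamma_divisor[OF assms] Gamma_multiple[OF assms] by auto
    show "2 * k - n \<in> {1..2 * k} - {k, 2 * k} \<and> 2 * k - (2 * k - n) = n \<and>
        (Gamma k (2 * k - n) = 1 \<longleftrightarrow> Gamma k n \<noteq> 1)"
      if "n \<in> {1..2 * k} - {k, 2 * k}" for n
      using that Gamma_reflect[of n k] by auto
  qed simp
  then show ?thesis
    using assms by (simp add: Gamma_eq_2_iff)
qed

theorem theorem1p8:
  fixes k :: nat
  assumes "k > 0"
  shows "(odd k \<longrightarrow> has_least_period (\<lambda>n. Gamma k n) k \<and>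
            card {n \<in> {1..k}. Gamma k n = 1} = card {n \<in> {1..k}. Gamma k n = 2} + 1)
       \<and> (even k \<longrightarrow> has_least_period (\<lambda>n. Gamma k n) (2 * k) \<and>
            card {n \<in> {1..2 * k}. Gamma k n = 1} = card {n \<in> {1..2 * k}. Gamma k n = 2} + 2)"
  using Gamma_has_least_period_odd Gamma_count_odd
    Gamma_has_least_period_even[OF assms] Gamma_count_double[OF assms]
  by blast

end
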